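(* Let $m\ge 1$, let $t_1<\cdots<t_m$ be real, and let $\omega_0,\dots,\omega_m$ be real with $\sum_{k=0}^{\ell}\omega_k\ge0$ for $\ell=0,\dots,m$ such that $w(x)={\rm e}^{-x^2}\big(\omega_0+\sum_{k=1}^m\omega_k\theta(x-t_k)\big)$ is not identically zero. Let $n\ge1$ and let $p(n)$ be the coefficient of $z^{n-1}$ in the monic orthogonal polynomial $P_n(z)$. Then $$p(n)=-\frac12\sum_{j=0}^{n-1}\sum_{k=1}^mR_{j,k},$$ and, provided $R_{n,k}\neq0$ for all $k$, $$p(n)=-\frac12\Big(\sum_{k=1}^mr_{n,k}+n\Big)\sum_{k=1}^mR_{n,k}-\sum_{k=1}^m\frac{r_{n,k}^2}{R_{n,k}}+\sum_{k=1}^mt_kr_{n,k}.$$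
   Context: $\theta(y)=1$ for $y>0$ and $0$ otherwise. $P_n$ ($n\ge0$) is the monic degree-$n$ polynomial orthogonal w.r.t. $w$ on $\mathbb{R}$, $\int P_jP_kw\,dx=h_k\delta_{jk}$, $h_k>0$; write $P_n(z)=z^n+p(n)z^{n-1}+\cdots$. For $k=1,\dots,m$: $R_{n,k}:=\omega_k{\rm e}^{-t_k^2}P_n(t_k)^2/h_n$ ($n\ge0$) and $r_{n,k}:=\omega_k{\rm e}^{-t_k^2}P_n(t_k)P_{n-1}(t_k)/h_{n-1}$ ($n\ge1$). *)

theory Defs
  imports "HOL-Analysis.Analysis" "HOL-Computational_Algebra.Polynomial"
begin

definition theta :: "real \<Rightarrow> real" where
  "theta y = (if y > 0 then 1 else 0)"

definition wgt :: "nat \<Rightarrow> (nat \<Rightarrow> real) \<Rightarrow> (nat \<Rightarrow> real) \<Rightarrow> real \<Rightarrow> real" where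
  "wgt m \<omega> t x = exp (-(x\<^sup>2)) * (\<omega> 0 + (\<Sum>k=1..m. \<omega> k * theta (x - t k)))"

definition is_monic_OPS :: "(real \<Rightarrow> real) \<Rightarrow> (nat \<Rightarrow> real poly) \<Rightarrow> bool" where
  "is_monic_OPS w P \<longleftrightarrow>
     (\<forall>n. degree (P n) = n \<and> lead_coeff (P n) = 1) \<and>
     (\<forall>j k. j \<noteq> k \<longrightarrow> (LINT x|lborel. poly (P j) x * poly (P k) x * w x) = 0) \<and>
     (\<forall>k. (LINT x|lborel. (poly (P k) x)\<^sup>2 * w x) > 0)"

definition hnorm :: "(real \<Rightarrow> real) \<Rightarrow> (nat \<Rightarrow> real poly) \<Rightarrow> nat \<Rightarrow> real" where
  "hnorm w P k = (LINT x|lborel. (poly (P k) x)\<^sup>2 * w x)"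

definition RR :: "(real \<Rightarrow> real) \<Rightarrow> (nat \<Rightarrow> real poly) \<Rightarrow> (nat \<Rightarrow> real) \<Rightarrow> (nat \<Rightarrow> real)
    \<Rightarrow> nat \<Rightarrow> nat \<Rightarrow> real" where
  "RR w P \<omega> t n k = \<omega> k * exp (-((t k)\<^sup>2)) * (poly (P n) (t k))\<^sup>2 / hnorm w P n"

definition rr :: "(real \<Rightarrow> real) \<Rightarrow> (nat \<Rightarrow> real poly) \<Rightarrow> (nat \<Rightarrow> real) \<Rightarrow> (nat \<Rightarrow> real)
    \<Rightarrow> nat \<Rightarrow> nat \<Rightarrow> real" where
  "rr w P \<omega> t n k = \<omega> k * exp (-((t k)\<^sup>2)) * poly (P n) (t k) * poly (P (n - 1)) (t k)
                      / hnorm w P (n - 1)"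

end

theory Submission
  imports Defs "HOL-Probability.Distributions" "HOL-Real_Asymp.Real_Asymp"
begin

(* Integration by parts against the Gaussian: (f e^(-x^2))' = (f' - 2 x f) e^(-x^2), so integrating
   f' - 2 x f against the weight gives 0 from the constant part and -f(t_k) e^(-t_k^2) from the
   half-line (t_k, oo) of each step.  Hence for every polynomial f
     int (f' - 2 x f) w = - sum_k omega_k e^(-t_k^2) f(t_k).
   For f = P_j^2, P_n P_(n-1) and x P_n P_(n-1) orthogonality evaluates the left-hand side, giving
     sum_k omega_k e^(-t_k^2) P_j(t_k)^2                     = 2 (p(j) - p(j+1)) h_j,
     sum_k omega_k e^(-t_k^2) P_n(t_k) P_(n-1)(t_k)          = 2 h_n - n h_(n-1),
     sum_k omega_k e^(-t_k^2) t_k P_n(t_k) P_(n-1)(t_k)      = p(n) h_(n-1) + 2 (p(n-1) - p(n+1)) h_n.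
   The first identity telescopes to the first formula; the second formula is what remains after
   eliminating h_n / h_(n-1) and p(n-1), p(n+1) from these identities. *)

lemma integrable_power_times_gaussian: "integrable lborel (\<lambda>x::real. x ^ k * exp (-(x\<^sup>2)))"
proof -
  have "integrable lborel (\<lambda>x. sqrt pi * (normal_density 0 (sqrt (1/2)) x * (x - 0) ^ k))"
    by (intro integrable_mult_right) (use integrable_normal_moment[of "sqrt (1/2)" 0 k] in simp)
  moreover have "(\<lambda>x. sqrt pi * (normal_density 0 (sqrt (1/2)) x * (x - 0) ^ k))
      = (\<lambda>x. x ^ k * exp (-(x\<^sup>2)))"
    by (simp add: normal_density_def power2_eq_square real_sqrt_mult mult.commute)
  ultimately show ?thesis by metis
qed

lemma poly_times_gaussian_eq_sum:
  "poly f x * exp (-(x\<^sup>2)) = (\<Sum>i\<le>degree f. coeff f i * (x ^ i * exp (-(x\<^sup>2))))"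
  by (simp add: poly_altdef sum_distrib_right mult.assoc)

lemma integrable_poly_times_gaussian: "integrable lborel (\<lambda>x::real. poly f x * exp (-(x\<^sup>2)))"
  unfolding poly_times_gaussian_eq_sum
  by (auto intro!: integrable_sum integrable_mult_right integrable_power_times_gaussian)

lemma poly_times_gaussian_tendsto_0:
  shows "((\<lambda>x::real. poly f x * exp (-(x\<^sup>2))) \<longlongrightarrow> 0) at_top"
    and "((\<lambda>x::real. poly f x * exp (-(x\<^sup>2))) \<longlongrightarrow> 0) at_bot"
  unfolding poly_times_gaussian_eq_sum
  by (intro tendsto_null_sum tendsto_mult_right_zero; real_asymp)+

definition gauss_deriv :: "real poly \<Rightarrow> real poly" where
  "gauss_deriv f = pderiv f - [:0, 2:] * f"

lemma has_real_derivative_poly_times_gaussian: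
  "((\<lambda>x. poly f x * exp (-(x\<^sup>2))) has_real_derivative poly (gauss_deriv f) x * exp (-(x\<^sup>2))) (at x)"
  unfolding gauss_deriv_def
  by (auto intro!: derivative_eq_intros simp: algebra_simps power2_eq_square)

lemma integral_gauss_deriv_times_gaussian:
  "(LINT x|lborel. poly (gauss_deriv f) x * exp (-(x\<^sup>2))) = 0"
proof -
  have "(LBINT x=-\<infinity>..\<infinity>. poly (gauss_deriv f) x * exp (-(x\<^sup>2))) = 0 - 0"
  proof (rule interval_integral_FTC_integrable[where F="\<lambda>x. poly f x * exp (-(x\<^sup>2))"])
    show "set_integrable lborel (einterval (-\<infinity>) \<infinity>) (\<lambda>x. poly (gauss_deriv f) x * exp (-(x\<^sup>2)))"
      by (simp add: set_integrable_def integrable_poly_times_gaussian)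
    show "(((\<lambda>x. poly f x * exp (-(x\<^sup>2))) \<circ> real_of_ereal) \<longlongrightarrow> 0) (at_right (-\<infinity>))"
      "(((\<lambda>x. poly f x * exp (-(x\<^sup>2))) \<circ> real_of_ereal) \<longlongrightarrow> 0) (at_left \<infinity>)"
      unfolding ereal_tendsto_simps by (fact poly_times_gaussian_tendsto_0)+
  qed (auto intro!: continuous_intros
            simp: has_real_derivative_poly_times_gaussian has_real_derivative_iff_has_vector_derivative[symmetric])
  then show ?thesis
    by (simp add: interval_lebesgue_integral_def set_lebesgue_integral_def)
qed

lemma integral_greaterThan_gauss_deriv_times_gaussian:
  "(LINT x|lborel. indicator {s<..} x * (poly (gauss_deriv f) x * exp (-(x\<^sup>2))))
     = - (poly f s * exp (-(s\<^sup>2)))"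
proof -
  have "(LBINT x=ereal s..\<infinity>. poly (gauss_deriv f) x * exp (-(x\<^sup>2))) = 0 - poly f s * exp (-(s\<^sup>2))"
  proof (rule interval_integral_FTC_integrable[where F="\<lambda>x. poly f x * exp (-(x\<^sup>2))"])
    show "set_integrable lborel (einterval (ereal s) \<infinity>) (\<lambda>x. poly (gauss_deriv f) x * exp (-(x\<^sup>2)))"
      unfolding set_integrable_def
      by (intro integrable_mult_indicator integrable_poly_times_gaussian) auto
    have "isCont (\<lambda>x. poly f x * exp (-(x\<^sup>2))) s"
      by (intro continuous_intros)
    then show "(((\<lambda>x. poly f x * exp (-(x\<^sup>2))) \<circ> real_of_ereal) \<longlongrightarrow> poly f s * exp (-(s\<^sup>2)))
        (at_right (ereal s))"
      unfolding ereal_tendsto_simps by (simp add: isCont_def filterlim_at_split)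
    show "(((\<lambda>x. poly f x * exp (-(x\<^sup>2))) \<circ> real_of_ereal) \<longlongrightarrow> 0) (at_left \<infinity>)"
      unfolding ereal_tendsto_simps by (fact poly_times_gaussian_tendsto_0)
  qed (auto intro!: continuous_intros
            simp: has_real_derivative_poly_times_gaussian has_real_derivative_iff_has_vector_derivative[symmetric])
  then show ?thesis
    by (simp add: interval_integral_to_infinity_eq set_lebesgue_integral_def)
qed

definition poly_integral :: "(real \<Rightarrow> real) \<Rightarrow> real poly \<Rightarrow> real" where
  "poly_integral w q = (LINT x|lborel. poly q x * w x)"

lemma poly_integral_smult: "poly_integral w (smult c q) = c * poly_integral w q"
  by (simp add: poly_integral_def mult.assoc)

locale poly_integrable_weight =
  fixes w :: "real \<Rightarrow> real"
  assumes integrable_poly_weight: "\<And>q. integrable lborel (\<lambda>x. poly q x * w x)"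
begin

lemma poly_integral_add: "poly_integral w (p + q) = poly_integral w p + poly_integral w q"
  using integrable_poly_weight[of p] integrable_poly_weight[of q]
  by (simp add: poly_integral_def distrib_right)

lemma poly_integral_diff: "poly_integral w (p - q) = poly_integral w p - poly_integral w q"
  using integrable_poly_weight[of p] integrable_poly_weight[of q]
  by (simp add: poly_integral_def left_diff_distrib)

end

(* The paper's p(n); the shift by pCons makes it 0 for n = 0, where coeff (P 0) (0 - 1) would be 1. *)
definition subleading_coeff :: "(nat \<Rightarrow> real poly) \<Rightarrow> nat \<Rightarrow> real" where
  "subleading_coeff P n = coeff (pCons 0 (P n)) n"

locale monic_OPS = poly_integrable_weight +
  fixes P :: "nat \<Rightarrow> real poly"
  assumes monic_orthogonal: "is_monic_OPS w P"
begin

lemma degree_P [simp]: "degree (P n) = n"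
  using monic_orthogonal by (simp add: is_monic_OPS_def)

lemma coeff_P_self [simp]: "coeff (P n) n = 1"
  using monic_orthogonal degree_P[of n] by (simp add: is_monic_OPS_def)

lemma coeff_P_gt [simp]: "n < i \<Longrightarrow> coeff (P n) i = 0"
  by (simp add: coeff_eq_0)

lemma hnorm_pos: "hnorm w P n > 0"
  using monic_orthogonal by (simp add: is_monic_OPS_def hnorm_def)

lemma poly_integral_P_times_P: "poly_integral w (P j * P k) = (if j = k then hnorm w P k else 0)"
  using monic_orthogonal by (simp add: is_monic_OPS_def poly_integral_def hnorm_def power2_eq_square mult.assoc)

lemma poly_integral_times_P_eq_0:
  assumes "degree q < j"
  shows "poly_integral w (q * P j) = 0"
  using assms
proof (induction "degree q" arbitrary: q rule: less_induct)
  case less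
  define c where "c = lead_coeff q"
  define r where "r = q - smult c (P (degree q))"
  have "poly_integral w (r * P j) = 0"
  proof (cases "r = 0")
    case False
    have "\<forall>i\<ge>degree q. coeff r i = 0"
      by (auto simp: r_def c_def coeff_eq_0 le_less)
    with False have "degree r < degree q"
      by (intro degree_lessI) auto
    with less show ?thesis by simp
  qed (simp add: poly_integral_def)
  moreover have "q * P j = r * P j + smult c (P (degree q) * P j)"
    by (simp add: r_def algebra_simps)
  ultimately show ?case
    using less.prems by (simp add: poly_integral_add poly_integral_smult poly_integral_P_times_P)
qed

lemma poly_integral_times_P:
  assumes "degree q \<le> j"
  shows "poly_integral w (q * P j) = coeff q j * hnorm w P j"
proof -
  define r where "r = q - smult (coeff q j) (P j)"
  have "poly_integral w (r * P j) = 0"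
  proof (cases "r = 0")
    case False
    have "\<forall>i\<ge>j. coeff r i = 0"
      using assms by (auto simp: r_def coeff_eq_0 le_less)
    with False show ?thesis
      by (intro poly_integral_times_P_eq_0 degree_lessI) auto
  qed (simp add: poly_integral_def)
  moreover have "q * P j = r * P j + smult (coeff q j) (P j * P j)"
    by (simp add: r_def algebra_simps)
  ultimately show ?thesis
    by (simp add: poly_integral_add poly_integral_smult poly_integral_P_times_P)
qed

lemma poly_integral_times_P_degree_Suc:
  assumes "degree q \<le> Suc j"
  shows "poly_integral w (q * P j)
           = (coeff q j - coeff q (Suc j) * subleading_coeff P (Suc j)) * hnorm w P j"
proof -
  define r where "r = q - smult (coeff q (Suc j)) (P (Suc j))"
  have "degree r \<le> j"
  proof (rule degree_le, intro allI impI)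
    fix i assume "j < i"
    then consider "i = Suc j" | "Suc j < i" by linarith
    then show "coeff r i = 0"
      using assms by cases (auto simp: r_def coeff_eq_0)
  qed
  have "q * P j = r * P j + smult (coeff q (Suc j)) (P (Suc j) * P j)"
    by (simp add: r_def algebra_simps)
  then have "poly_integral w (q * P j)
      = poly_integral w (r * P j) + coeff q (Suc j) * poly_integral w (P (Suc j) * P j)"
    by (simp add: poly_integral_add poly_integral_smult)
  also have "\<dots> = coeff r j * hnorm w P j"
    using \<open>degree r \<le> j\<close> by (simp add: poly_integral_times_P poly_integral_P_times_P)
  also have "coeff r j = coeff q j - coeff q (Suc j) * subleading_coeff P (Suc j)"
    by (simp add: r_def subleading_coeff_def)
  finally show ?thesis .
qed

lemma poly_integral_gauss_deriv_P_sq: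
  "poly_integral w (gauss_deriv (P j * P j))
     = - 2 * (subleading_coeff P j - subleading_coeff P (Suc j)) * hnorm w P j"
proof -
  have decomp: "gauss_deriv (P j * P j) = smult 2 (pderiv (P j) * P j) - smult 2 (pCons 0 (P j) * P j)"
    by (rule poly_ext) (simp add: gauss_deriv_def pderiv_mult algebra_simps)
  have pderiv_P_P: "poly_integral w (pderiv (P j) * P j) = 0"
    by (simp add: poly_integral_times_P degree_pderiv coeff_pderiv)
  have x_P_P: "poly_integral w (pCons 0 (P j) * P j)
      = (subleading_coeff P j - subleading_coeff P (Suc j)) * hnorm w P j"
    using poly_integral_times_P_degree_Suc[of "pCons 0 (P j)" j] by (simp add: subleading_coeff_def)
  show ?thesis
    unfolding decomp poly_integral_diff poly_integral_smult pderiv_P_P x_P_P by (simp add: algebra_simps)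
qed

lemma poly_integral_gauss_deriv_P_Suc_times_P:
  "poly_integral w (gauss_deriv (P (Suc i) * P i))
     = real (Suc i) * hnorm w P i - 2 * hnorm w P (Suc i)"
proof -
  have decomp: "gauss_deriv (P (Suc i) * P i)
      = pderiv (P (Suc i)) * P i + pderiv (P i) * P (Suc i) - smult 2 (pCons 0 (P i) * P (Suc i))"
    by (rule poly_ext) (simp add: gauss_deriv_def pderiv_mult algebra_simps)
  have pderiv_P_Suc_P: "poly_integral w (pderiv (P (Suc i)) * P i) = real (Suc i) * hnorm w P i"
    by (simp add: poly_integral_times_P degree_pderiv coeff_pderiv)
  have pderiv_P_P_Suc: "poly_integral w (pderiv (P i) * P (Suc i)) = 0"
    by (simp add: poly_integral_times_P degree_pderiv coeff_pderiv)
  have x_P_P_Suc: "poly_integral w (pCons 0 (P i) * P (Suc i)) = hnorm w P (Suc i)"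
    using poly_integral_times_P[of "pCons 0 (P i)" "Suc i"] by simp
  show ?thesis
    unfolding decomp poly_integral_add poly_integral_diff poly_integral_smult
      pderiv_P_Suc_P pderiv_P_P_Suc x_P_P_Suc by simp
qed

lemma poly_integral_gauss_deriv_x_P_Suc_times_P:
  "poly_integral w (gauss_deriv (pCons 0 (P (Suc i) * P i)))
     = - subleading_coeff P (Suc i) * hnorm w P i
       - 2 * (subleading_coeff P i - subleading_coeff P (Suc (Suc i))) * hnorm w P (Suc i)"
proof -
  have decomp: "gauss_deriv (pCons 0 (P (Suc i) * P i))
      = P (Suc i) * P i + pCons 0 (pderiv (P (Suc i))) * P i + pCons 0 (pderiv (P i)) * P (Suc i)
        - smult 2 (pCons 0 (pCons 0 (P i)) * P (Suc i))"
    by (rule poly_ext) (simp add: gauss_deriv_def pderiv_mult pderiv_pCons algebra_simps)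
  have P_Suc_P: "poly_integral w (P (Suc i) * P i) = 0"
    by (simp add: poly_integral_P_times_P)
  have x_pderiv_P_Suc_P: "poly_integral w (pCons 0 (pderiv (P (Suc i))) * P i)
      = - subleading_coeff P (Suc i) * hnorm w P i"
    using poly_integral_times_P_degree_Suc[of "pCons 0 (pderiv (P (Suc i)))" i]
    by (cases i) (simp_all add: degree_pderiv coeff_pderiv subleading_coeff_def algebra_simps)
  have x_pderiv_P_P_Suc: "poly_integral w (pCons 0 (pderiv (P i)) * P (Suc i)) = 0"
    using poly_integral_times_P[of "pCons 0 (pderiv (P i))" "Suc i"]
    by (simp add: degree_pderiv coeff_pderiv)
  have x2_P_P_Suc: "poly_integral w (pCons 0 (pCons 0 (P i)) * P (Suc i))
      = (subleading_coeff P i - subleading_coeff P (Suc (Suc i))) * hnorm w P (Suc i)"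
    using poly_integral_times_P_degree_Suc[of "pCons 0 (pCons 0 (P i))" "Suc i"]
    by (simp add: subleading_coeff_def)
  show ?thesis
    unfolding decomp poly_integral_add poly_integral_diff poly_integral_smult
      P_Suc_P x_pderiv_P_Suc_P x_pderiv_P_P_Suc x2_P_P_Suc by (simp add: algebra_simps)
qed

end

lemma theta_eq_indicator: "theta (x - s) = indicator {s<..} x"
  by (simp add: theta_def indicator_def)

lemma poly_times_wgt_eq:
  "poly q x * wgt m \<omega> t x = \<omega> 0 * (poly q x * exp (-(x\<^sup>2)))
     + (\<Sum>k=1..m. \<omega> k * (indicator {t k<..} x * (poly q x * exp (-(x\<^sup>2)))))"
  unfolding wgt_def theta_eq_indicator distrib_left sum_distrib_left
  by (intro arg_cong2[where f="(+)"] sum.cong refl) (simp_all only: mult_ac)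

lemma integrable_indicator_poly_times_gaussian:
  "integrable lborel (\<lambda>x::real. indicator {s<..} x * (poly q x * exp (-(x\<^sup>2))))"
  using integrable_mult_indicator[of "{s<..}" lborel "\<lambda>x. poly q x * exp (-(x\<^sup>2))"]
  by (simp add: integrable_poly_times_gaussian)

lemma poly_integrable_weight_wgt: "poly_integrable_weight (wgt m \<omega> t)"
  by unfold_locales
    (simp add: poly_times_wgt_eq integrable_poly_times_gaussian integrable_indicator_poly_times_gaussian)

lemma poly_integral_wgt_gauss_deriv:
  "poly_integral (wgt m \<omega> t) (gauss_deriv f) = - (\<Sum>k=1..m. \<omega> k * exp (-((t k)\<^sup>2)) * poly f (t k))"
proof -
  have expand: "poly_integral (wgt m \<omega> t) q = \<omega> 0 * (LINT x|lborel. poly q x * exp (-(x\<^sup>2)))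
      + (\<Sum>k=1..m. \<omega> k * (LINT x|lborel. indicator {t k<..} x * (poly q x * exp (-(x\<^sup>2)))))" for q
    by (simp add: poly_integral_def poly_times_wgt_eq integrable_poly_times_gaussian
                  integrable_indicator_poly_times_gaussian)
  show ?thesis
    unfolding expand integral_gauss_deriv_times_gaussian integral_greaterThan_gauss_deriv_times_gaussian
    by (simp add: sum_negf[symmetric] mult_ac)
qed

(* With e k = omega_k e^(-t_k^2), a k = P_n(t_k), b k = P_(n-1)(t_k), the sums over K are the
   integration-by-parts identities, and R, r are R_(n,k), r_(n,k). *)
lemma boundary_sums_identity:
  fixes e a b \<tau> R r :: "nat \<Rightarrow> real" and K :: "nat set"
  assumes "h0 > 0" "h1 > 0"
    and R: "\<And>k. R k = e k * (a k)\<^sup>2 / h1" and r: "\<And>k. r k = e k * a k * b k / h0"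
    and R_nonzero: "\<forall>k\<in>K. R k \<noteq> 0"
    and sum_a_sq: "(\<Sum>k\<in>K. e k * (a k)\<^sup>2) = 2 * (p1 - p2) * h1"
    and sum_b_sq: "(\<Sum>k\<in>K. e k * (b k)\<^sup>2) = 2 * (p0 - p1) * h0"
    and sum_ab: "(\<Sum>k\<in>K. e k * a k * b k) = 2 * h1 - N * h0"
    and sum_\<tau>ab: "(\<Sum>k\<in>K. \<tau> k * (e k * a k * b k)) = p1 * h0 + 2 * (p0 - p2) * h1"
  shows "p1 = - (1/2) * ((\<Sum>k\<in>K. r k) + N) * (\<Sum>k\<in>K. R k)
              - (\<Sum>k\<in>K. (r k)\<^sup>2 / R k) + (\<Sum>k\<in>K. \<tau> k * r k)"
proof -
  have "(\<Sum>k\<in>K. (r k)\<^sup>2 / R k) = h1 / h0\<^sup>2 * (\<Sum>k\<in>K. e k * (b k)\<^sup>2)"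
    unfolding sum_distrib_left
  proof (rule sum.cong)
    fix k assume "k \<in> K"
    with R_nonzero have "e k \<noteq> 0" "a k \<noteq> 0"
      by (auto simp: R)
    with \<open>h0 > 0\<close> \<open>h1 > 0\<close> show "(r k)\<^sup>2 / R k = h1 / h0\<^sup>2 * (e k * (b k)\<^sup>2)"
      by (simp add: R r field_simps power2_eq_square)
  qed simp
  also have "\<dots> = 2 * (p0 - p1) * h1 / h0"
    unfolding sum_b_sq using \<open>h0 > 0\<close> by (simp add: power2_eq_square)
  finally have sum_r_sq_div_R: "(\<Sum>k\<in>K. (r k)\<^sup>2 / R k) = 2 * (p0 - p1) * h1 / h0" .
  have sum_R: "(\<Sum>k\<in>K. R k) = 2 * (p1 - p2)"
    using \<open>h1 > 0\<close> by (simp add: R sum_divide_distrib[symmetric] sum_a_sq)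
  have sum_r: "(\<Sum>k\<in>K. r k) = (2 * h1 - N * h0) / h0"
    by (simp add: r sum_divide_distrib[symmetric] sum_ab)
  have sum_\<tau>r: "(\<Sum>k\<in>K. \<tau> k * r k) = (p1 * h0 + 2 * (p0 - p2) * h1) / h0"
    unfolding sum_\<tau>ab[symmetric] r by (simp add: sum_divide_distrib)
  show ?thesis
    unfolding sum_r_sq_div_R sum_R sum_r sum_\<tau>r
    using \<open>h0 > 0\<close> by (simp add: field_simps)
qed

theorem lemma2p9:
  fixes m n :: nat and t \<omega> :: "nat \<Rightarrow> real" and P :: "nat \<Rightarrow> real poly"
  assumes "m \<ge> 1"
    and "\<forall>k. 1 \<le> k \<and> k < m \<longrightarrow> t k < t (k + 1)"
    and "\<forall>l\<le>m. (\<Sum>k\<le>l. \<omega> k) \<ge> 0"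
    and "\<exists>x. wgt m \<omega> t x \<noteq> 0"
    and "is_monic_OPS (wgt m \<omega> t) P"
    and "n \<ge> 1"
  shows "coeff (P n) (n - 1) = - (1/2) * (\<Sum>j<n. \<Sum>k=1..m. RR (wgt m \<omega> t) P \<omega> t j k) \<and>
        ((\<forall>k\<in>{1..m}. RR (wgt m \<omega> t) P \<omega> t n k \<noteq> 0) \<longrightarrow>
         coeff (P n) (n - 1) =
           - (1/2) * ((\<Sum>k=1..m. rr (wgt m \<omega> t) P \<omega> t n k) + real n)
                   * (\<Sum>k=1..m. RR (wgt m \<omega> t) P \<omega> t n k)
           - (\<Sum>k=1..m. (rr (wgt m \<omega> t) P \<omega> t n k)\<^sup>2 / RR (wgt m \<omega> t) P \<omega> t n k)
           + (\<Sum>k=1..m. t k * rr (wgt m \<omega> t) P \<omega> t n k))"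
proof -
  (* The hypotheses on m, t and omega only ensure that the orthogonal family exists. *)
  interpret monic_OPS "wgt m \<omega> t" P
    by (intro monic_OPS.intro monic_OPS_axioms.intro poly_integrable_weight_wgt assms(5))
  define e where "e k = \<omega> k * exp (-((t k)\<^sup>2))" for k
  define h where "h = hnorm (wgt m \<omega> t) P"
  define p where "p = subleading_coeff P"
  obtain i where n: "n = Suc i"
    using assms(6) by (cases n) auto
  note boundary = poly_integral_wgt_gauss_deriv[of m \<omega> t, folded e_def]
  have sum_sq: "(\<Sum>k=1..m. e k * (poly (P j) (t k))\<^sup>2) = 2 * (p j - p (Suc j)) * h j" for j
    using poly_integral_gauss_deriv_P_sq[of j]
    by (simp add: boundary power2_eq_square p_def h_def algebra_simps)
  have sum_RR: "(\<Sum>k=1..m. RR (wgt m \<omega> t) P \<omega> t j k) = 2 * (p j - p (Suc j))" for j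
    using sum_sq[of j] hnorm_pos[of j]
    by (simp add: RR_def e_def h_def sum_divide_distrib[symmetric])
  have p_n: "coeff (P n) (n - 1) = p n" and "p 0 = 0"
    by (simp_all add: n p_def subleading_coeff_def)
  show ?thesis
    unfolding p_n
  proof (intro conjI impI boundary_sums_identity)
    show "p n = - (1/2) * (\<Sum>j<n. \<Sum>k=1..m. RR (wgt m \<omega> t) P \<omega> t j k)"
      unfolding sum_RR sum_distrib_left[symmetric] sum_lessThan_telescope' using \<open>p 0 = 0\<close> by simp
    show "(\<Sum>k=1..m. e k * poly (P n) (t k) * poly (P i) (t k)) = 2 * h n - real n * h i"
      using poly_integral_gauss_deriv_P_Suc_times_P[of i] by (simp add: boundary n h_def mult.assoc)
    show "(\<Sum>k=1..m. t k * (e k * poly (P n) (t k) * poly (P i) (t k)))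
        = p n * h i + 2 * (p i - p (Suc n)) * h n"
      using poly_integral_gauss_deriv_x_P_Suc_times_P[of i] by (simp add: boundary n h_def p_def mult_ac)
  qed (use sum_sq hnorm_pos in \<open>auto simp: n RR_def rr_def e_def h_def\<close>)
qed

end
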